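(* Consider the algorithm AOD described in the context, with known horizon $T$, under assumptions (A1)–(A3). Let $\mathbf{u}_1,\ldots,\mathbf{u}_{T+1}\in\Omega$ and $P_T=\sum_{t=1}^T\|\mathbf{u}_{t+1}-\mathbf{u}_t\|_2$, and suppose $P_T\le D$. Then \[ \sum_{t=1}^T f_t(\mathbf{w}_t)-\sum_{t=1}^T f_t(\mathbf{u}_t)\le\Big(\frac{1+\sqrt2}{2}DG+G\sqrt{DP_T}+\sqrt{6c(T)}\Big)\sqrt{T}, \] where $c(T)=1+\ln T+\ln(1+\log_2 T)+\ln\frac{5+3\ln(1+T)}{2}$.
   Context: Online convex optimization: $\Omega\subseteq\mathbb{R}^d$ convex; in round $t=1,\ldots,T$ the learner plays $\mathbf{w}_t\in\Omega$, then a convex $f_t:\Omega\to\mathbb{R}$ is revealed. Assumptions: (A1) $\|\nabla f_t(\mathbf{w})\|_2\le G$ for all $\mathbf{w}\in\Omega$, $t\in[T]$; (A2) $\mathbf{0}\in\Omega$ and $\max_{\mathbf{w},\mathbf{w}'\in\Omega}\|\mathbf{w}-\mathbf{w}'\|_2\le D$; (A3) $0\le f_t\le1$ on $\Omega$. $\Pi_\Omega$ is Euclidean projection. Dense geometric covering intervals: $\mathcal{D}=\bigcup_{k\ge0,\,2^k\le T}\mathcal{D}_k$, $\mathcal{D}_k=\{[(i-1)2^k+1,\,i2^k]: i=1,2,\ldots\}$. Algorithm AOD: for each $I\in\mathcal{D}$ an expert $E_I$ runs online gradient descent $\mathbf{w}_{t+1,I}=\Pi_\Omega[\mathbf{w}_{t,I}-\eta_I\nabla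 f_t(\mathbf{w}_{t,I})]$, $\eta_I=D/(G\sqrt{|I|})$, over rounds $t\in I$; its initial point is arbitrary if $\min I=1$, and otherwise is the next iterate of the expert of the preceding same-length interval $[\min I-|I|,\min I-1]$ after processing $f_{\min I-1}$. Active experts at round $t$: $\mathcal{A}_t=\{E_I:I\in\mathcal{D},t\in I\}$. Meta-algorithm (AdaNormalHedge): $\Phi(R,C)=\exp([R]_+^2/(3C))$, $[x]_+=\max(0,x)$, $\Phi(0,0)=1$, $w(R,C)=\tfrac12(\Phi(R+1,C+1)-\Phi(R-1,C+1))$, $R_{t-1,I}=\sum_{u=\min I}^{t-1}(f_u(\mathbf{w}_u)-f_u(\mathbf{w}_{u,I}))$, $C_{t-1,I}=\sum_{u=\min I}^{t-1}|f_u(\mathbf{w}_u)-f_u(\mathbf{w}_{u,I})|$, $p_{t,I}=w(R_{t-1,I},C_{t-1,I})/\sum_{E_{I'}\in\mathcal{A}_t}w(R_{t-1,I'},C_{t-1,I'})$, played point $\mathbf{w}_t=\sum_{E_I\in\mathcal{A}_t}p_{t,I}\mathbf{w}_{t,I}$. *)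

theory Defs
  imports "HOL-Analysis.Analysis"
begin

text \<open>AdaNormalHedge potential and weight.  With C = 0 the division yields 0,
so Phi R 0 = 1, matching the convention Phi(0,0)=1.\<close>
definition Phi :: "real \<Rightarrow> real \<Rightarrow> real" where
  "Phi R C = exp ((max 0 R)^2 / (3 * C))"

definition anh_weight :: "real \<Rightarrow> real \<Rightarrow> real" where
  "anh_weight R C = (Phi (R + 1) (C + 1) - Phi (R - 1) (C + 1)) / 2"

text \<open>Levels k with 2^k \<le> T; the unique interval of D_k containing round t
(t \<ge> 1) is [seg_start k t, seg_start k t + 2^k - 1].\<close>
definition levels :: "nat \<Rightarrow> nat set" where
  "levels T = {k. 2 ^ k \<le> T}"

definition seg_start :: "nat \<Rightarrow> nat \<Rightarrow> nat" where
  "seg_start k t = (t - 1) div 2 ^ k * 2 ^ k + 1"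

text \<open>Cumulative instantaneous regret R_{t-1,I} and its absolute version
C_{t-1,I} of the active expert of level k at round t (x k u is that expert's
iterate at round u, w u the played point).\<close>
definition cumR :: "(nat \<Rightarrow> 'a \<Rightarrow> real) \<Rightarrow> (nat \<Rightarrow> 'a) \<Rightarrow> (nat \<Rightarrow> nat \<Rightarrow> 'a) \<Rightarrow> nat \<Rightarrow> nat \<Rightarrow> real" where
  "cumR f w x k t = (\<Sum>u\<in>{seg_start k t..<t}. f u (w u) - f u (x k u))"

definition cumC :: "(nat \<Rightarrow> 'a \<Rightarrow> real) \<Rightarrow> (nat \<Rightarrow> 'a) \<Rightarrow> (nat \<Rightarrow> nat \<Rightarrow> 'a) \<Rightarrow> nat \<Rightarrow> nat \<Rightarrow> real" where
  "cumC f w x k t = (\<Sum>u\<in>{seg_start k t..<t}. \<bar>f u (w u) - f u (x k u)\<bar>)"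

definition meta_prob :: "nat \<Rightarrow> (nat \<Rightarrow> 'a \<Rightarrow> real) \<Rightarrow> (nat \<Rightarrow> 'a) \<Rightarrow> (nat \<Rightarrow> nat \<Rightarrow> 'a) \<Rightarrow> nat \<Rightarrow> nat \<Rightarrow> real" where
  "meta_prob T f w x k t =
     anh_weight (cumR f w x k t) (cumC f w x k t) /
     (\<Sum>k'\<in>levels T. anh_weight (cumR f w x k' t) (cumC f w x k' t))"

definition cT :: "nat \<Rightarrow> real" where
  "cT T = 1 + ln (real T) + ln (1 + log 2 (real T)) + ln ((5 + 3 * ln (1 + real T)) / 2)"

end

theory Submission
  imports Defs
begin

(*
  The potential Phi(R, C) = exp([R]_+^2 / (3 C)) is jointly convex in (R, C), and because
  cosh y <= exp(y^2 / 2) its values at (R + 1, C + 1) and (R - 1, C + 1) average to at most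
  Phi(R, C) + 3 / (2 (C + 1)).  Interpolating, one round with regret r in [-1, 1] raises
  Phi - 1 - 3 ln(1 + C) by at most w(R, C) r.  The played point is the w-weighted average of
  the active experts, so by Jensen the sum over experts of w r is never positive, and the total
  of Phi - 1 - 3 ln(1 + C) over all segments of all levels stays nonpositive.  Hence every
  segment I ends with Phi at most (number of levels) T (1 + 3 ln(1 + T)), i.e. the meta-regret
  against the expert of I is at most sqrt(3 |I| c(T)).

  The level k with 2^k <= T < 2^(k+1) covers [1, T] by two segments, giving meta-regret
  sqrt(6 c(T) T); its expert is one run of projected gradient descent with step size
  eta = D / (G sqrt(2^k)), whose dynamic regret against u is at most
  (D^2 + 2 D P_T) / (2 eta) + eta T G^2 / 2 <= ((1 + sqrt 2) / 2 D G + G sqrt(D P_T)) sqrt T.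
*)

section \<open>The AdaNormalHedge potential\<close>

lemma cosh_le_exp_half_square:
  fixes y :: real
  assumes y: "\<bar>y\<bar> \<le> 2/3"
  shows "cosh y \<le> exp (y^2 / 2)"
proof -
  obtain t1 where t1: "\<bar>t1\<bar> \<le> \<bar>y\<bar>" "exp y = (\<Sum>m<4. y^m / fact m) + exp t1 / fact 4 * y^4"
    using Maclaurin_exp_le[of y 4] by blast
  obtain t2 where t2: "\<bar>t2\<bar> \<le> \<bar>y\<bar>"
    "exp (-y) = (\<Sum>m<4. (-y)^m / fact m) + exp t2 / fact 4 * (-y)^4"
    using Maclaurin_exp_le[of "-y" 4] by auto
  have exp_le: "exp t \<le> 19/9" if "\<bar>t\<bar> \<le> 2/3" for t :: real
  proof -
    have "exp t \<le> exp (2/3)" using that by simp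
    also have "\<dots> \<le> 1 + 2/3 + (2/3)^2" by (rule exp_bound) auto
    finally show ?thesis by (simp add: power2_eq_square)
  qed
  have y4: "0 \<le> y^4" by (rule zero_le_even_power) simp
  have "exp y + exp (-y) = 2 + y^2 + (exp t1 + exp t2) / 24 * y^4"
    using t1(2) t2(2) by (simp add: lessThan_nat_numeral fact_numeral eval_nat_numeral field_simps)
  also have "\<dots> \<le> 2 + y^2 + (19/9 + 19/9) / 24 * y^4"
  proof -
    have "exp t1 + exp t2 \<le> 19/9 + 19/9" using exp_le t1(1) t2(1) y by (intro add_mono) auto
    then show ?thesis using y4 by (intro add_left_mono mult_right_mono divide_right_mono) auto
  qed
  also have "\<dots> \<le> 2 * (1 + y^2 / 2 + (y^2 / 2)^2 / 2)"
    using y4 by (simp add: power2_eq_square eval_nat_numeral)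
  also have "\<dots> \<le> 2 * exp (y^2 / 2)"
    using exp_lower_Taylor_quadratic[of "y^2 / 2"] by simp
  finally show ?thesis by (simp add: cosh_field_def)
qed

lemma exp_mult_one_minus_le: "exp x * (1 - x) \<le> (1::real)"
proof -
  have "exp x * (1 - x) \<le> exp x * exp (-x)"
    using exp_ge_add_one_self[of "-x"] by (intro mult_left_mono) auto
  then show ?thesis by (simp add: exp_minus_inverse)
qed

lemma exp_add_le_of_perturbation:
  fixes X E D :: real
  assumes X: "0 \<le> X" and D: "1 \<le> D" and E: "E * (3 * D) \<le> 1 - X"
  shows "exp (X + E) \<le> exp X + 1 / (2 * D)"
proof (cases "E \<le> 0")
  case True
  then have "exp (X + E) \<le> exp X" by simp
  moreover have "0 \<le> 1 / (2 * D)" using D by simp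
  ultimately show ?thesis by linarith
next
  case False
  have "E * 3 \<le> E * (3 * D)" using False D by (intro mult_left_mono) auto
  then have "E \<le> 1/3" using E X by linarith
  then have "exp E \<le> exp (1/3)" by simp
  also have "\<dots> \<le> 1 + 1/3 + (1/3)^2" by (rule exp_bound) auto
  finally have exp_E: "exp E \<le> 13/9" by (simp add: power2_eq_square)
  have "exp (X + E) = exp X + exp X * (exp E - 1)" by (simp add: exp_add algebra_simps)
  also have "exp E - 1 \<le> E * exp E"
    using exp_mult_one_minus_le[of E] by (simp add: algebra_simps)
  also have "exp X * (E * exp E) \<le> exp X * ((1 - X) / (3 * D) * (13/9))"
  proof -
    have "0 < E * (3 * D)" using False D by simp
    then have "X \<le> 1" using E by linarith
    then show ?thesis using False E D exp_E by (intro mult_left_mono mult_mono) (auto simp: pos_le_divide_eq)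
  qed
  also have "\<dots> = exp X * (1 - X) * (13 / (27 * D))" by simp
  also have "\<dots> \<le> 1 * (13 / (27 * D))"
    using exp_mult_one_minus_le[of X] D by (intro mult_right_mono) auto
  finally show ?thesis using D by (simp add: field_simps)
qed

lemma Phi_nonneg: "0 \<le> Phi R C"
  by (simp add: Phi_def)

lemma Phi_ge_one: "0 \<le> C \<Longrightarrow> 1 \<le> Phi R C"
  by (simp add: Phi_def)

lemma Phi_nonpos: "R \<le> 0 \<Longrightarrow> Phi R C = 1"
  by (simp add: Phi_def)

lemma Phi_pos: "0 \<le> R \<Longrightarrow> Phi R C = exp (R^2 / (3 * C))"
  by (simp add: Phi_def)

lemma Phi_mono:
  assumes "0 \<le> C" "R \<le> R'"
  shows "Phi R C \<le> Phi R' C"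
proof -
  have "(max 0 R)^2 \<le> (max 0 R')^2" using assms by (intro power_mono) auto
  then show ?thesis unfolding Phi_def using assms by (simp add: divide_right_mono)
qed

lemma anh_weight_nonneg: "0 \<le> C \<Longrightarrow> 0 \<le> anh_weight R C"
  unfolding anh_weight_def using Phi_mono[of "C + 1" "R - 1" "R + 1"] by simp

lemma Phi_endpoints_le:
  fixes R C :: real
  assumes C: "0 \<le> C" and RC: "\<bar>R\<bar> \<le> C"
  shows "Phi (R + 1) (C + 1) + Phi (R - 1) (C + 1) \<le> 2 * Phi R C + 3 / (C + 1)"
proof (cases "R \<le> 0")
  case True
  define z where "z = 1 / (3 * (C + 1))"
  have z: "0 \<le> z" "z \<le> 1/3" using C by (auto simp: z_def field_simps)
  have "(max 0 (R + 1))^2 \<le> 1" using True RC by (intro power_le_one) auto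
  then have "(max 0 (R + 1))^2 / (3 * (C + 1)) \<le> z"
    unfolding z_def using C by (intro divide_right_mono) auto
  then have "Phi (R + 1) (C + 1) \<le> exp z" by (simp add: Phi_def)
  also have "\<dots> \<le> 1 + z + z^2" using z by (intro exp_bound) auto
  also have "\<dots> \<le> 1 + 3 / (C + 1)"
  proof -
    have "z^2 \<le> z" using z mult_right_mono[of z 1 z] by (simp add: power2_eq_square)
    moreover have "2 * z \<le> 3 / (C + 1)" using C by (simp add: z_def field_simps)
    ultimately show ?thesis by linarith
  qed
  finally show ?thesis using True by (simp add: Phi_nonpos)
next
  case False
  then have R: "0 < R" and C_pos: "0 < C" using RC by auto
  define D where "D = C + 1"
  have D: "0 < D" "C \<noteq> 0" using C_pos by (auto simp: D_def)
  define X where "X = R^2 / (3 * C)"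
  define A where "A = (R^2 + 1) / (3 * D)"
  define y where "y = 2 * R / (3 * D)"
  define E where "E = A + y^2 / 2 - X"
  have X: "0 \<le> X" using C by (simp add: X_def)
  have "Phi (R - 1) D \<le> exp ((R - 1)^2 / (3 * D))"
    unfolding Phi_def using D
    by (intro exp_mono divide_right_mono) (auto simp: max_def power2_eq_square)
  also have "(R - 1)^2 / (3 * D) = A - y"
    by (simp add: A_def y_def power2_diff diff_divide_distrib add_divide_distrib)
  moreover have "Phi (R + 1) D = exp (A + y)"
    using R by (simp add: Phi_pos A_def y_def power2_sum add_divide_distrib)
  ultimately have "Phi (R + 1) D + Phi (R - 1) D \<le> exp (A + y) + exp (A - y)"
    by simp
  also have "\<dots> = 2 * exp A * cosh y"
    by (simp add: cosh_field_def exp_add exp_diff field_simps exp_minus)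
  also have "\<dots> \<le> 2 * exp A * exp (y^2 / 2)"
    using R RC D by (intro mult_left_mono cosh_le_exp_half_square) (auto simp: y_def D_def field_simps)
  also have "\<dots> = 2 * exp (X + E)" by (simp add: E_def exp_add)
  also have "\<dots> \<le> 2 * exp X + 3 / D"
  proof -
    have "E * (3 * D) = R^2 + 1 + 2 * R^2 / (3 * D) - D * R^2 / C"
      using D by (simp add: E_def A_def X_def y_def field_simps power2_eq_square)
    moreover have "D * R^2 / C = R^2 + 3 * X" using D by (simp add: D_def X_def field_simps)
    moreover have "2 * R^2 / (3 * D) \<le> 2 * X"
      using C_pos by (simp add: X_def D_def divide_left_mono)
    ultimately have "E * (3 * D) \<le> 1 - X" by linarith
    then have "exp (X + E) \<le> exp X + 1 / (2 * D)"
      using X C by (intro exp_add_le_of_perturbation) (auto simp: D_def)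
    moreover have "1 / D \<le> 3 / D" using D by (simp add: divide_right_mono)
    ultimately show ?thesis using D by (simp add: field_simps)
  qed
  finally show ?thesis using R by (simp add: Phi_pos X_def D_def)
qed

lemma perspective_square_convex:
  fixes a b C C' s :: real
  assumes C: "0 \<le> C" "0 < C'" and C_zero: "C = 0 \<Longrightarrow> a = 0" and s: "0 \<le> s" "s \<le> 1"
  shows "((1 - s) * a + s * b)^2 / ((1 - s) * C + s * C') \<le> (1 - s) * (a^2 / C) + s * (b^2 / C')"
proof (cases "s = 0 \<or> C = 0")
  case True
  then show ?thesis using C C_zero s by (auto simp: power_mult_distrib power2_eq_square mult_ac)
next
  case False
  then have pos: "0 < s" "0 < C" "0 < (1 - s) * C + s * C'" using C s by (auto intro: add_nonneg_pos)
  have "((1 - s) * C + s * C') * ((1 - s) * (a^2 / C) + s * (b^2 / C')) - ((1 - s) * a + s * b)^2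
      = (1 - s) * s * (a * C' - b * C)^2 / (C * C')"
    using pos C by (simp add: field_simps power2_eq_square)
  also have "\<dots> \<ge> 0" using pos C s by simp
  finally show ?thesis using pos by (simp add: divide_le_eq mult.commute)
qed

lemma Phi_interpolate:
  fixes R C s d :: real
  assumes C: "0 \<le> C" "\<bar>R\<bar> \<le> C" and s: "0 \<le> s" "s \<le> 1"
  shows "Phi (R + s * d) (C + s) \<le> (1 - s) * Phi R C + s * Phi (R + d) (C + 1)"
proof -
  have "R + s * d = (1 - s) * R + s * (R + d)" by (simp add: algebra_simps)
  also have "\<dots> \<le> (1 - s) * max 0 R + s * max 0 (R + d)"
    using s by (intro add_mono mult_left_mono) auto
  finally have "max 0 (R + s * d) \<le> (1 - s) * max 0 R + s * max 0 (R + d)"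
    using s by simp
  then have "(max 0 (R + s * d))^2 \<le> ((1 - s) * max 0 R + s * max 0 (R + d))^2"
    by (intro power_mono) auto
  also have "\<dots> / ((1 - s) * (3 * C) + s * (3 * (C + 1)))
      \<le> (1 - s) * ((max 0 R)^2 / (3 * C)) + s * ((max 0 (R + d))^2 / (3 * (C + 1)))"
    using C s by (intro perspective_square_convex) auto
  also have "(1 - s) * (3 * C) + s * (3 * (C + 1)) = 3 * (C + s)" by (simp add: algebra_simps)
  finally have "(max 0 (R + s * d))^2 / (3 * (C + s))
      \<le> (1 - s) * ((max 0 R)^2 / (3 * C)) + s * ((max 0 (R + d))^2 / (3 * (C + 1)))"
    using C s by (simp add: divide_right_mono)
  then have "Phi (R + s * d) (C + s)
      \<le> exp ((1 - s) * ((max 0 R)^2 / (3 * C)) + s * ((max 0 (R + d))^2 / (3 * (C + 1))))"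
    by (simp add: Phi_def)
  also have "\<dots> \<le> (1 - s) * Phi R C + s * Phi (R + d) (C + 1)"
  proof -
    have "exp ((1 - s) * p + s * q) \<le> (1 - s) * exp p + s * exp q" for p q
      using convex_onD[OF exp_convex, of s p q] s by simp
    then show ?thesis unfolding Phi_def .
  qed
  finally show ?thesis .
qed

lemma Phi_step:
  fixes R C r :: real
  assumes C: "0 \<le> C" "\<bar>R\<bar> \<le> C" and r: "\<bar>r\<bar> \<le> 1"
  shows "Phi (R + r) (C + \<bar>r\<bar>) \<le> Phi R C + anh_weight R C * r + 3 * \<bar>r\<bar> / (2 * (C + 1))"
proof -
  \<comment> \<open>(R + r, C + |r|) lies on the segment from (R, C) to (R + d, C + 1)\<close>
  obtain d where d: "d = 1 \<or> d = -1" "r = \<bar>r\<bar> * d"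
  proof (cases "0 \<le> r")
    case True
    then show ?thesis using that[of 1] by simp
  next
    case False
    then show ?thesis using that[of "-1"] by simp
  qed
  define c where "c = 3 / (C + 1)"
  define X where "X = Phi (R + 1) (C + 1) - Phi (R - 1) (C + 1)"
  have E: "Phi (R + 1) (C + 1) + Phi (R - 1) (C + 1) \<le> 2 * Phi R C + c"
    unfolding c_def using C by (rule Phi_endpoints_le)
  have "Phi (R + 1) (C + 1) - Phi R C \<le> X / 2 + c / 2"
    using E by (simp add: X_def field_simps)
  moreover have "Phi (R - 1) (C + 1) - Phi R C \<le> - X / 2 + c / 2"
    using E by (simp add: X_def field_simps)
  ultimately have "Phi (R + d) (C + 1) - Phi R C \<le> d * X / 2 + c / 2"
    using d(1) by (elim disjE) simp_all
  then have "\<bar>r\<bar> * (Phi (R + d) (C + 1) - Phi R C) \<le> \<bar>r\<bar> * (d * X / 2 + c / 2)"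
    by (rule mult_left_mono) simp
  also have "\<dots> = (\<bar>r\<bar> * d) * X / 2 + \<bar>r\<bar> * c / 2" by (simp add: algebra_simps)
  also have "\<dots> = anh_weight R C * r + 3 * \<bar>r\<bar> / (2 * (C + 1))"
    using C unfolding d(2)[symmetric] by (simp add: anh_weight_def X_def c_def field_simps)
  finally have "\<bar>r\<bar> * (Phi (R + d) (C + 1) - Phi R C) \<le> anh_weight R C * r + 3 * \<bar>r\<bar> / (2 * (C + 1))" .
  moreover have "Phi (R + r) (C + \<bar>r\<bar>) \<le> (1 - \<bar>r\<bar>) * Phi R C + \<bar>r\<bar> * Phi (R + d) (C + 1)"
    using Phi_interpolate[OF C, of "\<bar>r\<bar>" d] r d(2) by simp
  ultimately show ?thesis by (simp add: algebra_simps)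
qed

lemma ln_one_plus_ge_half:
  fixes y :: real
  assumes "0 \<le> y" "y \<le> 1"
  shows "y / 2 \<le> ln (1 + y)"
proof -
  have "exp (y / 2) \<le> 1 + y / 2 + (y / 2)^2" using assms by (intro exp_bound) auto
  also have "\<dots> \<le> 1 + y" using assms mult_right_mono[of y 1 y] by (simp add: power2_eq_square)
  finally have "exp (y / 2) \<le> 1 + y" .
  then show ?thesis using ln_ge_iff[of "1 + y" "y / 2"] assms by simp
qed

lemma ln_increment_ge:
  fixes C s :: real
  assumes "0 \<le> C" "0 \<le> s" "s \<le> 1"
  shows "s / (2 * (C + 1)) \<le> ln (1 + (C + s)) - ln (1 + C)"
proof -
  have "1 + s / (1 + C) = (1 + (C + s)) / (1 + C)" using assms by (simp add: field_simps)
  then have "ln (1 + (C + s)) - ln (1 + C) = ln (1 + s / (1 + C))"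
    using assms by (simp add: ln_div)
  moreover have "s / (1 + C) / 2 \<le> ln (1 + s / (1 + C))"
    using assms by (intro ln_one_plus_ge_half) (auto simp: field_simps)
  ultimately show ?thesis by (simp add: field_simps)
qed

(* The allowance 1 + 3 ln(1 + C) absorbs the second-order term of Phi_step. *)
definition Phi_excess :: "real \<Rightarrow> real \<Rightarrow> real" where
  "Phi_excess R C = Phi R C - 1 - 3 * ln (1 + C)"

lemma Phi_excess_zero [simp]: "Phi_excess 0 0 = 0"
  by (simp add: Phi_excess_def Phi_def)

lemma Phi_excess_step:
  fixes R C r :: real
  assumes C: "0 \<le> C" "\<bar>R\<bar> \<le> C" and r: "\<bar>r\<bar> \<le> 1"
  shows "Phi_excess (R + r) (C + \<bar>r\<bar>) \<le> Phi_excess R C + anh_weight R C * r"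
  using Phi_step[OF C r] ln_increment_ge[OF C(1) abs_ge_zero r]
  by (simp add: Phi_excess_def)

section \<open>Restarted experts on the dense geometric covering\<close>

lemma seg_start_le: "1 \<le> t \<Longrightarrow> seg_start k t \<le> t"
  unfolding seg_start_def using div_mult_mod_eq[of "t - 1" "2 ^ k"] by linarith

lemma seg_start_ge_one: "1 \<le> seg_start k t"
  by (simp add: seg_start_def)

lemma seg_start_eqI:
  assumes "j * 2 ^ k < t" "t \<le> Suc j * 2 ^ k"
  shows "seg_start k t = j * 2 ^ k + 1"
proof -
  have "(t - 1) div 2 ^ k = j" using assms mult.commute[of j "2 ^ k"] by (intro div_nat_eqI) auto
  then show ?thesis by (simp add: seg_start_def)
qed

lemma seg_start_Suc:
  assumes "seg_start k (Suc t) \<noteq> Suc t"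
  shows "seg_start k (Suc t) = seg_start k t"
proof -
  define j where "j = t div 2 ^ k"
  have "j * 2 ^ k \<le> t" "t < Suc j * 2 ^ k"
    using dividend_less_div_times[of "2 ^ k" t] by (simp_all add: j_def)
  moreover have "j * 2 ^ k \<noteq> t" using assms by (simp add: seg_start_def j_def)
  ultimately have "j * 2 ^ k < t" by simp
  then show ?thesis
    using seg_start_eqI[of j k t] seg_start_eqI[of j k "Suc t"] \<open>t < Suc j * 2 ^ k\<close> by simp
qed

(* For the regrets r k u = f u (w u) - f u (x k u) these are cumR and cumC of Defs. *)
definition past_regret :: "(nat \<Rightarrow> nat \<Rightarrow> real) \<Rightarrow> nat \<Rightarrow> nat \<Rightarrow> real" where
  "past_regret r k t = (\<Sum>u\<in>{seg_start k t..<t}. r k u)"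

definition past_abs_regret :: "(nat \<Rightarrow> nat \<Rightarrow> real) \<Rightarrow> nat \<Rightarrow> nat \<Rightarrow> real" where
  "past_abs_regret r k t = (\<Sum>u\<in>{seg_start k t..<t}. \<bar>r k u\<bar>)"

definition seg_regret :: "(nat \<Rightarrow> nat \<Rightarrow> real) \<Rightarrow> nat \<Rightarrow> nat \<Rightarrow> real" where
  "seg_regret r k t = (\<Sum>u\<in>{seg_start k t..t}. r k u)"

definition seg_abs_regret :: "(nat \<Rightarrow> nat \<Rightarrow> real) \<Rightarrow> nat \<Rightarrow> nat \<Rightarrow> real" where
  "seg_abs_regret r k t = (\<Sum>u\<in>{seg_start k t..t}. \<bar>r k u\<bar>)"

lemma past_abs_regret_nonneg: "0 \<le> past_abs_regret r k t"
  unfolding past_abs_regret_def by (auto intro: sum_nonneg)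

lemma abs_past_regret_le: "\<bar>past_regret r k t\<bar> \<le> past_abs_regret r k t"
  unfolding past_regret_def past_abs_regret_def by (rule sum_abs)

lemma abs_seg_regret_le: "\<bar>seg_regret r k t\<bar> \<le> seg_abs_regret r k t"
  unfolding seg_regret_def seg_abs_regret_def by (rule sum_abs)

lemma seg_abs_regret_le:
  assumes "\<forall>u\<in>{seg_start k t..t}. \<bar>r k u\<bar> \<le> 1"
  shows "seg_abs_regret r k t \<le> real (t + 1 - seg_start k t)"
  using sum_bounded_above[of "{seg_start k t..t}" "\<lambda>u. \<bar>r k u\<bar>" 1] assms
  by (simp add: seg_abs_regret_def)

lemma seg_regret_Suc:
  "seg_regret r k (Suc t) = past_regret r k (Suc t) + r k (Suc t)"
  "seg_abs_regret r k (Suc t) = past_abs_regret r k (Suc t) + \<bar>r k (Suc t)\<bar>"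
  using seg_start_le[of "Suc t" k]
  by (simp_all add: seg_regret_def seg_abs_regret_def past_regret_def past_abs_regret_def
      atLeastLessThanSuc_atLeastAtMost[symmetric] sum.atLeastLessThan_Suc)

lemma past_regret_Suc:
  assumes "seg_start k (Suc t) \<noteq> Suc t"
  shows "past_regret r k (Suc t) = seg_regret r k t"
    and "past_abs_regret r k (Suc t) = seg_abs_regret r k t"
  using seg_start_Suc[OF assms]
  by (simp_all add: past_regret_def past_abs_regret_def seg_regret_def seg_abs_regret_def
      atLeastLessThanSuc_atLeastAtMost)

lemma past_regret_seg_start:
  assumes "seg_start k t = t"
  shows "past_regret r k t = 0" and "past_abs_regret r k t = 0"
  using assms by (simp_all add: past_regret_def past_abs_regret_def)

definition seg_ends :: "nat \<Rightarrow> nat \<Rightarrow> nat set" where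
  "seg_ends k t = {e \<in> {1..t}. e = t \<or> seg_start k (Suc e) = Suc e}"

lemma seg_ends_Suc:
  "seg_ends k (Suc t) =
     insert (Suc t) (if seg_start k (Suc t) = Suc t then seg_ends k t else seg_ends k t - {t})"
  by (auto simp: seg_ends_def)

lemma card_seg_ends_le: "card (seg_ends k t) \<le> t"
proof -
  have "seg_ends k t \<subseteq> {1..t}" by (auto simp: seg_ends_def)
  then show ?thesis using card_mono[of "{1..t}"] by fastforce
qed

definition level_excess :: "(nat \<Rightarrow> nat \<Rightarrow> real) \<Rightarrow> nat \<Rightarrow> nat \<Rightarrow> real" where
  "level_excess r k t = (\<Sum>e\<in>seg_ends k t. Phi_excess (seg_regret r k e) (seg_abs_regret r k e))"

lemma level_excess_Suc:
  assumes r: "\<bar>r k (Suc t)\<bar> \<le> 1"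
  shows "level_excess r k (Suc t)
    \<le> level_excess r k t + anh_weight (past_regret r k (Suc t)) (past_abs_regret r k (Suc t)) * r k (Suc t)"
proof -
  define R where "R = past_regret r k (Suc t)"
  define C where "C = past_abs_regret r k (Suc t)"
  let ?F = "\<lambda>e. Phi_excess (seg_regret r k e) (seg_abs_regret r k e)"
  have step: "?F (Suc t) \<le> Phi_excess R C + anh_weight R C * r k (Suc t)"
    unfolding seg_regret_Suc R_def[symmetric] C_def[symmetric]
    by (rule Phi_excess_step[OF _ _ r]) (simp_all add: R_def C_def past_abs_regret_nonneg abs_past_regret_le)
  have fin: "finite (seg_ends k t)" and new: "Suc t \<notin> seg_ends k t" by (auto simp: seg_ends_def)
  show ?thesis
  proof (cases "seg_start k (Suc t) = Suc t")
    case True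
    then have "R = 0" "C = 0" by (simp_all add: R_def C_def past_regret_seg_start)
    then show ?thesis
      using step True fin new by (simp add: level_excess_def seg_ends_Suc past_regret_seg_start)
  next
    case False
    then have t: "t \<in> seg_ends k t" by (cases t) (auto simp: seg_ends_def seg_start_def)
    have "R = seg_regret r k t" "C = seg_abs_regret r k t"
      using past_regret_Suc[OF False] by (simp_all add: R_def C_def)
    then show ?thesis
      using step False fin new t
      by (simp add: level_excess_def seg_ends_Suc sum.remove R_def C_def)
  qed
qed

lemma level_excess_zero [simp]: "level_excess r k 0 = 0"
  by (simp add: level_excess_def seg_ends_def)

lemma sum_level_excess_nonpos:
  assumes L: "finite L"
    and r_le: "\<forall>k\<in>L. \<forall>t\<in>{1..n}. \<bar>r k t\<bar> \<le> 1"
    and weights: "\<forall>t\<in>{1..n}. (\<Sum>k\<in>L. anh_weight (past_regret r k t) (past_abs_regret r k t) * r k t) \<le> 0"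
  shows "(\<Sum>k\<in>L. level_excess r k n) \<le> 0"
  using r_le weights
proof (induction n)
  case 0
  then show ?case by simp
next
  case (Suc n)
  have "(\<Sum>k\<in>L. level_excess r k (Suc n))
      \<le> (\<Sum>k\<in>L. level_excess r k n
          + anh_weight (past_regret r k (Suc n)) (past_abs_regret r k (Suc n)) * r k (Suc n))"
    using Suc.prems(1) by (intro sum_mono level_excess_Suc) auto
  also have "\<dots> \<le> 0"
  proof -
    have "(\<Sum>k\<in>L. level_excess r k n) \<le> 0" using Suc.prems by (intro Suc.IH) auto
    moreover have "(\<Sum>k\<in>L. anh_weight (past_regret r k (Suc n)) (past_abs_regret r k (Suc n))
        * r k (Suc n)) \<le> 0"
      using Suc.prems(2) by auto
    ultimately show ?thesis by (simp add: sum.distrib)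
  qed
  finally show ?case .
qed

lemma seg_Phi_le:
  assumes L: "finite L" "k \<in> L" and e: "e \<in> seg_ends k n"
    and r_le: "\<forall>k\<in>L. \<forall>t\<in>{1..n}. \<bar>r k t\<bar> \<le> 1"
    and weights: "\<forall>t\<in>{1..n}. (\<Sum>k\<in>L. anh_weight (past_regret r k t) (past_abs_regret r k t) * r k t) \<le> 0"
  shows "Phi (seg_regret r k e) (seg_abs_regret r k e) \<le> real (card L) * n * (1 + 3 * ln (1 + real n))"
proof -
  define K where "K = 1 + 3 * ln (1 + real n)"
  let ?P = "\<lambda>k e. Phi (seg_regret r k e) (seg_abs_regret r k e)"
  have fin: "finite (seg_ends k' n)" for k' by (simp add: seg_ends_def)
  have allowance: "1 + 3 * ln (1 + seg_abs_regret r k' e') \<le> K"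
    if k': "k' \<in> L" and e': "e' \<in> seg_ends k' n" for k' e'
  proof -
    have "1 \<le> e'" "e' \<le> n" using e' by (auto simp: seg_ends_def)
    then have "seg_abs_regret r k' e' \<le> real (e' + 1 - seg_start k' e')"
      using r_le k' seg_start_ge_one[of k' e'] by (intro seg_abs_regret_le) auto
    also have "\<dots> \<le> real n" using \<open>e' \<le> n\<close> seg_start_ge_one[of k' e'] by simp
    finally show ?thesis
      using abs_seg_regret_le[of r k' e'] by (simp add: K_def)
  qed
  have "?P k e \<le> (\<Sum>e'\<in>seg_ends k n. ?P k e')"
    using e fin by (intro member_le_sum) (auto simp: Phi_nonneg)
  also have "\<dots> \<le> (\<Sum>k'\<in>L. \<Sum>e'\<in>seg_ends k' n. ?P k' e')"
    using L by (intro member_le_sum[where f = "\<lambda>k'. \<Sum>e'\<in>seg_ends k' n. ?P k' e'"])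
      (auto intro: sum_nonneg simp: Phi_nonneg)
  also have "\<dots> = (\<Sum>k'\<in>L. level_excess r k' n)
      + (\<Sum>k'\<in>L. \<Sum>e'\<in>seg_ends k' n. 1 + 3 * ln (1 + seg_abs_regret r k' e'))"
    by (simp add: level_excess_def Phi_excess_def flip: sum.distrib)
  also have "\<dots> \<le> 0 + (\<Sum>k'\<in>L. \<Sum>e'\<in>seg_ends k' n. K)"
    using sum_level_excess_nonpos[OF L(1) r_le weights] allowance
    by (intro add_mono sum_mono) auto
  also have "\<dots> \<le> (\<Sum>k'\<in>L. real n * K)"
  proof -
    have "(\<Sum>e'\<in>seg_ends k' n. K) \<le> real n * K" for k'
      using card_seg_ends_le[of k' n] by (simp add: K_def mult_right_mono)
    then have "(\<Sum>k'\<in>L. \<Sum>e'\<in>seg_ends k' n. K) \<le> (\<Sum>k'\<in>L. real n * K)"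
      by (blast intro: sum_mono)
    then show ?thesis by simp
  qed
  finally show ?thesis by (simp add: K_def)
qed

lemma le_sqrt_of_Phi_le:
  fixes R C B N :: real
  assumes P: "Phi R C \<le> B" and RC: "\<bar>R\<bar> \<le> C" and CN: "C \<le> N"
  shows "R \<le> sqrt (3 * N * ln B)"
proof (cases "R \<le> 0")
  case True
  have "1 \<le> B" using Phi_ge_one[of C R] P RC by linarith
  then show ?thesis using True RC CN by (intro order.trans[OF True]) simp
next
  case False
  then have C: "0 < C" using RC by linarith
  have exp_le: "exp (R^2 / (3 * C)) \<le> B" using P False by (simp add: Phi_pos)
  moreover have "0 < B" using exp_le exp_gt_zero[of "R^2 / (3 * C)"] by linarith
  ultimately have "R^2 / (3 * C) \<le> ln B" by (simp add: ln_ge_iff)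
  then have "R^2 \<le> 3 * C * ln B" using C by (simp add: divide_le_eq mult.commute)
  also have "\<dots> \<le> 3 * N * ln B"
    using CN \<open>R^2 / (3 * C) \<le> ln B\<close> C by (intro mult_right_mono) (auto intro: order.trans[rotated])
  finally show ?thesis by (rule real_le_rsqrt)
qed

lemma sqrt_add_le_sqrt_double:
  fixes a b :: real
  assumes "0 \<le> a" "0 \<le> b"
  shows "sqrt a + sqrt b \<le> sqrt (2 * (a + b))"
proof (rule real_le_rsqrt)
  have "(sqrt a + sqrt b)^2 = a + b + 2 * (sqrt a * sqrt b)"
    using assms by (simp add: power2_eq_square algebra_simps)
  also have "2 * (sqrt a * sqrt b) \<le> a + b"
    using sum_squares_bound[of "sqrt a" "sqrt b"] assms by (simp add: power2_eq_square)
  finally show "(sqrt a + sqrt b)^2 \<le> 2 * (a + b)" by simp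
qed

lemma seg_regret_le_sqrt:
  assumes L: "finite L" "k \<in> L" and e: "e \<in> seg_ends k n"
    and r_le: "\<forall>k\<in>L. \<forall>t\<in>{1..n}. \<bar>r k t\<bar> \<le> 1"
    and weights: "\<forall>t\<in>{1..n}. (\<Sum>k\<in>L. anh_weight (past_regret r k t) (past_abs_regret r k t) * r k t) \<le> 0"
  shows "seg_regret r k e
    \<le> sqrt (3 * real (e + 1 - seg_start k e) * ln (real (card L) * n * (1 + 3 * ln (1 + real n))))"
proof (rule le_sqrt_of_Phi_le)
  show "Phi (seg_regret r k e) (seg_abs_regret r k e) \<le> real (card L) * n * (1 + 3 * ln (1 + real n))"
    using L e r_le weights by (rule seg_Phi_le)
  show "\<bar>seg_regret r k e\<bar> \<le> seg_abs_regret r k e" by (rule abs_seg_regret_le)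
  show "seg_abs_regret r k e \<le> real (e + 1 - seg_start k e)"
    using e r_le L seg_start_ge_one[of k e] by (intro seg_abs_regret_le) (auto simp: seg_ends_def)
qed

lemma top_level_regret_le:
  assumes L: "finite L" "kk \<in> L" and kk: "2 ^ kk \<le> T" "T < 2 ^ Suc kk"
    and r_le: "\<forall>k\<in>L. \<forall>t\<in>{1..T}. \<bar>r k t\<bar> \<le> 1"
    and weights: "\<forall>t\<in>{1..T}. (\<Sum>k\<in>L. anh_weight (past_regret r k t) (past_abs_regret r k t) * r k t) \<le> 0"
  shows "(\<Sum>t=1..T. r kk t) \<le> sqrt (6 * real T * ln (real (card L) * T * (1 + 3 * ln (1 + real T))))"
proof -
  define m :: nat where "m = 2 ^ kk"
  define B where "B = real (card L) * T * (1 + 3 * ln (1 + real T))"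
  have m: "1 \<le> m" "m \<le> T" "T < 2 * m" using kk by (auto simp: m_def)
  have seg_bound: "seg_regret r kk e \<le> sqrt (3 * real (e + 1 - seg_start kk e) * ln B)"
    if "e \<in> seg_ends kk T" for e
    unfolding B_def using L that r_le weights by (rule seg_regret_le_sqrt)
  have start_first: "seg_start kk t = 1" if "1 \<le> t" "t \<le> m" for t
    using seg_start_eqI[of 0 kk t] that by (simp add: m_def)
  have start_second: "seg_start kk t = m + 1" if "m < t" "t \<le> T" for t
    using seg_start_eqI[of 1 kk t] that m by (simp add: m_def)
  have "m \<in> seg_ends kk T"
  proof (cases "m < T")
    case True
    then show ?thesis using m start_second[of "Suc m"] by (simp add: seg_ends_def)
  next
    case False
    then show ?thesis using m by (simp add: seg_ends_def)
  qed
  then have first: "(\<Sum>t=1..m. r kk t) \<le> sqrt (3 * m * ln B)"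
    using seg_bound[of m] start_first[of m] m by (simp add: seg_regret_def)
  have second: "(\<Sum>t=m+1..T. r kk t) \<le> sqrt (3 * real (T - m) * ln B)"
  proof (cases "m < T")
    case True
    have "T \<in> seg_ends kk T" using m by (simp add: seg_ends_def)
    then show ?thesis using seg_bound[of T] start_second[of T] True by (simp add: seg_regret_def)
  next
    case False
    then show ?thesis using m by simp
  qed
  have "1 \<le> B"
  proof -
    have "1 \<le> card L" using L by (auto simp: Suc_le_eq card_gt_0_iff)
    moreover have "1 \<le> 1 + 3 * ln (1 + real T)" by simp
    ultimately show ?thesis using m unfolding B_def by (intro mult_ge1_I) auto
  qed
  then have lnB: "0 \<le> ln B" by simp
  have "{1..T} = {1..m} \<union> {m+1..T}" using m by auto
  then have "(\<Sum>t=1..T. r kk t) = (\<Sum>t=1..m. r kk t) + (\<Sum>t=m+1..T. r kk t)"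
    by (simp add: sum.union_disjoint)
  also have "\<dots> \<le> sqrt (3 * m * ln B) + sqrt (3 * real (T - m) * ln B)"
    using first second by (rule add_mono)
  also have "\<dots> \<le> sqrt (2 * (3 * m * ln B + 3 * real (T - m) * ln B))"
    using lnB by (intro sqrt_add_le_sqrt_double) auto
  also have "3 * m * ln B + 3 * real (T - m) * ln B = 3 * T * ln B"
    using m by (simp add: of_nat_diff algebra_simps)
  finally show ?thesis by (simp add: B_def mult.assoc)
qed

lemma levels_eq_atMost:
  assumes "2 ^ kk \<le> T" "T < 2 ^ Suc kk"
  shows "levels T = {..kk}"
proof -
  have "2 ^ k \<le> T \<longleftrightarrow> k \<le> kk" for k
  proof
    assume "2 ^ k \<le> T"
    then have "(2::nat) ^ k < 2 ^ Suc kk" using assms by linarith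
    then show "k \<le> kk" using power_less_imp_less_exp[of "2::nat" k "Suc kk"] by simp
  next
    assume "k \<le> kk"
    then show "2 ^ k \<le> T" using assms power_increasing[of k kk "2::nat"] by linarith
  qed
  then show ?thesis by (auto simp: levels_def)
qed

lemma ln_anh_bound_le_cT:
  assumes T: "1 \<le> T" and kk: "2 ^ kk \<le> T" "T < 2 ^ Suc kk"
  shows "ln (real (card (levels T)) * T * (1 + 3 * ln (1 + real T))) \<le> cT T"
proof -
  define L where "L = ln (1 + real T)"
  have L: "0 \<le> L" by (simp add: L_def)
  have "real kk \<le> log 2 T"
  proof -
    have "(2::real) powr kk = 2 ^ kk" by (simp add: powr_realpow)
    also have "\<dots> \<le> T" using kk by (metis of_nat_le_iff of_nat_numeral of_nat_power)
    finally show ?thesis using T by (subst le_log_iff) auto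
  qed
  then have "ln (real (card (levels T))) \<le> ln (1 + log 2 T)"
    using levels_eq_atMost[OF kk] by simp
  moreover have "ln (1 + 3 * L) \<le> 1 + ln ((5 + 3 * L) / 2)"
  proof -
    have "1 + 3 * L \<le> exp 1 * ((5 + 3 * L) / 2)"
      using exp_ge_add_one_self[of 1] L mult_right_mono[of 2 "exp 1" "(5 + 3 * L) / 2"] by simp
    then have "ln (1 + 3 * L) \<le> ln (exp 1 * ((5 + 3 * L) / 2))" using L by simp
    also have "\<dots> = 1 + ln ((5 + 3 * L) / 2)" using L ln_mult[of "exp 1" "(5 + 3 * L) / 2"] by simp
    finally show ?thesis .
  qed
  moreover have "ln (real (card (levels T)) * T * (1 + 3 * L))
      = ln (real (card (levels T))) + ln T + ln (1 + 3 * L)"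
    using T L levels_eq_atMost[OF kk] by (simp add: ln_mult)
  ultimately show ?thesis by (simp add: cT_def L_def)
qed

lemma normalized_sum_in:
  fixes y :: "'i \<Rightarrow> 'a::real_vector"
  assumes "finite L" "convex \<Omega>" "0 \<in> \<Omega>" "\<forall>k\<in>L. y k \<in> \<Omega>" "\<forall>k\<in>L. 0 \<le> a k"
  shows "(\<Sum>k\<in>L. (a k / (\<Sum>j\<in>L. a j)) *\<^sub>R y k) \<in> \<Omega>"
proof (cases "(\<Sum>j\<in>L. a j) = 0")
  case True
  then show ?thesis using assms(3) by simp
next
  case False
  then have "0 < (\<Sum>j\<in>L. a j)" using assms(5) sum_nonneg[of L a] by fastforce
  then show ?thesis
    using assms by (intro convex_sum) (auto simp: sum_divide_distrib[symmetric])
qed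

lemma normalized_sum_regret_nonpos:
  fixes y :: "'i \<Rightarrow> 'a::real_vector"
  assumes L: "finite L" and f: "convex_on \<Omega> f" and y: "\<forall>k\<in>L. y k \<in> \<Omega>" and a: "\<forall>k\<in>L. 0 \<le> a k"
  shows "(\<Sum>k\<in>L. a k * (f (\<Sum>j\<in>L. (a j / (\<Sum>i\<in>L. a i)) *\<^sub>R y j) - f (y k))) \<le> 0"
proof (cases "(\<Sum>i\<in>L. a i) = 0")
  case True
  then have "\<forall>k\<in>L. a k = 0" using sum_nonneg_eq_0_iff[OF L] a by blast
  then show ?thesis by simp
next
  case False
  define W where "W = (\<Sum>i\<in>L. a i)"
  define p where "p = (\<Sum>j\<in>L. (a j / W) *\<^sub>R y j)"
  have W: "0 < W" using False a sum_nonneg[of L a] by (fastforce simp: W_def)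
  have "f p \<le> (\<Sum>k\<in>L. (a k / W) * f (y k))"
    unfolding p_def using L f y a W False
    by (intro convex_on_sum) (auto simp: W_def sum_divide_distrib[symmetric])
  also have "(\<Sum>k\<in>L. (a k / W) * f (y k)) = (\<Sum>k\<in>L. a k * f (y k)) / W"
    by (simp add: sum_divide_distrib)
  finally have "W * f p \<le> (\<Sum>k\<in>L. a k * f (y k))"
    using W by (simp add: pos_le_divide_eq mult.commute)
  then show ?thesis
    by (simp add: p_def W_def right_diff_distrib sum_subtractf sum_distrib_right)
qed

lemma aod_meta_regret:
  fixes \<Omega> :: "'a::real_vector set" and f :: "nat \<Rightarrow> 'a \<Rightarrow> real" and x :: "nat \<Rightarrow> nat \<Rightarrow> 'a"
  assumes T: "1 \<le> T" and kk: "2 ^ kk \<le> T" "T < 2 ^ Suc kk"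
    and convex_dom: "convex \<Omega>" and zero_in: "0 \<in> \<Omega>"
    and convex_f: "\<forall>t\<in>{1..T}. convex_on \<Omega> (f t)"
    and f_range: "\<forall>t\<in>{1..T}. \<forall>v\<in>\<Omega>. 0 \<le> f t v \<and> f t v \<le> 1"
    and x_in: "\<forall>k\<in>levels T. \<forall>t\<in>{1..T}. x k t \<in> \<Omega>"
    and play: "\<forall>t\<in>{1..T}. w t = (\<Sum>k\<in>levels T. meta_prob T f w x k t *\<^sub>R x k t)"
  shows "(\<Sum>t=1..T. f t (w t) - f t (x kk t)) \<le> sqrt (6 * cT T) * sqrt T"
proof -
  have levels: "levels T = {..kk}" by (rule levels_eq_atMost[OF kk])
  define r where "r k t = f t (w t) - f t (x k t)" for k t
  define a where "a t k = anh_weight (past_regret r k t) (past_abs_regret r k t)" for t k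
  have a_nonneg: "\<forall>k\<in>levels T. 0 \<le> a t k" for t
    by (simp add: a_def anh_weight_nonneg past_abs_regret_nonneg)
  have w_eq: "w t = (\<Sum>k\<in>levels T. (a t k / (\<Sum>j\<in>levels T. a t j)) *\<^sub>R x k t)" if "t \<in> {1..T}" for t
    using play that
    by (simp add: meta_prob_def cumR_def cumC_def past_regret_def past_abs_regret_def a_def r_def)
  have r_le: "\<forall>k\<in>levels T. \<forall>t\<in>{1..T}. \<bar>r k t\<bar> \<le> 1"
  proof (intro ballI)
    fix k t assume k: "k \<in> levels T" and t: "t \<in> {1..T}"
    have "w t \<in> \<Omega>"
      unfolding w_eq[OF t] using levels x_in k t a_nonneg
      by (intro normalized_sum_in[OF _ convex_dom zero_in]) auto
    then have "0 \<le> f t (w t)" "f t (w t) \<le> 1" "0 \<le> f t (x k t)" "f t (x k t) \<le> 1"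
      using f_range x_in k t by auto
    then show "\<bar>r k t\<bar> \<le> 1" by (simp add: r_def abs_le_iff)
  qed
  have weights: "\<forall>t\<in>{1..T}. (\<Sum>k\<in>levels T. a t k * r k t) \<le> 0"
    using normalized_sum_regret_nonpos[of "levels T" \<Omega> "f _" "\<lambda>k. x k _"] convex_f x_in a_nonneg
    by (simp add: levels r_def w_eq)
  have "(\<Sum>t=1..T. r kk t)
      \<le> sqrt (6 * real T * ln (real (card (levels T)) * T * (1 + 3 * ln (1 + real T))))"
    using levels kk r_le weights by (intro top_level_regret_le) (auto simp: a_def)
  also have "\<dots> \<le> sqrt (6 * real T * cT T)"
    using ln_anh_bound_le_cT[OF T kk] by (simp add: mult_left_mono)
  finally show ?thesis by (simp add: r_def real_sqrt_mult mult_ac)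
qed

section \<open>Projected online gradient descent\<close>

lemma projected_iterates_in:
  assumes "closed \<Omega>" "\<Omega> \<noteq> {}" "xs 1 \<in> \<Omega>"
    and "\<forall>t\<in>{1..<T}. xs (Suc t) = closest_point \<Omega> (y t)"
  shows "\<forall>t\<in>{1..T}. xs t \<in> \<Omega>"
proof
  fix t assume t: "t \<in> {1..T}"
  then obtain t' where "t = Suc t'" by (cases t) auto
  then show "xs t \<in> \<Omega>"
    using assms t closest_point_in_set[OF assms(1,2)] by (cases "t' = 0") auto
qed

lemma convex_on_gradient_ineq:
  fixes f :: "'a::euclidean_space \<Rightarrow> real"
  assumes \<Omega>: "convex \<Omega>" and f: "convex_on \<Omega> f"
    and deriv: "(f has_derivative (\<lambda>h. g \<bullet> h)) (at x within \<Omega>)"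
    and x: "x \<in> \<Omega>" and y: "y \<in> \<Omega>"
  shows "f x + g \<bullet> (y - x) \<le> f y"
proof -
  define p where "p s = x + s *\<^sub>R (y - x)" for s :: real
  have p_eq: "p s = (1 - s) *\<^sub>R x + s *\<^sub>R y" for s by (simp add: p_def algebra_simps)
  have p_in: "p ` {0..1} \<subseteq> \<Omega>" using convexD[OF \<Omega> x y] by (auto simp: p_eq)
  have "(p has_derivative (\<lambda>s. s *\<^sub>R (y - x))) (at 0 within {0..1})"
    unfolding p_def by (auto intro!: derivative_eq_intros)
  moreover have "(f has_derivative (\<lambda>h. g \<bullet> h)) (at (p 0) within p ` {0..1})"
    using has_derivative_subset[OF deriv p_in] by (simp add: p_def)
  ultimately have "((f \<circ> p) has_derivative (\<lambda>h. g \<bullet> h) \<circ> (\<lambda>s. s *\<^sub>R (y - x))) (at 0 within {0..1})"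
    by (rule diff_chain_within)
  moreover have "(\<lambda>h. g \<bullet> h) \<circ> (\<lambda>s. s *\<^sub>R (y - x)) = (*) (g \<bullet> (y - x))"
    by (auto simp: fun_eq_iff)
  ultimately have "((f \<circ> p) has_field_derivative (g \<bullet> (y - x))) (at 0 within {0..1})"
    by (simp add: has_field_derivative_def)
  then have "((\<lambda>s. ((f \<circ> p) s - (f \<circ> p) 0) / (s - 0)) \<longlongrightarrow> g \<bullet> (y - x)) (at 0 within {0..1})"
    by (simp only: has_field_derivative_iff)
  moreover have "\<forall>\<^sub>F s in at 0 within {0..1}. ((f \<circ> p) s - (f \<circ> p) 0) / (s - 0) \<le> f y - f x"
    unfolding eventually_at_filter
  proof (intro always_eventually allI impI)
    fix s :: real assume s: "s \<noteq> 0" "s \<in> {0..1}"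
    have "f (p s) \<le> (1 - s) * f x + s * f y"
      using s x y by (auto simp: p_eq intro: convex_onD[OF f])
    then have "f (p s) - f x \<le> s * (f y - f x)" by (simp add: algebra_simps)
    moreover have "0 < s" "p 0 = x" using s by (auto simp: p_def)
    ultimately show "((f \<circ> p) s - (f \<circ> p) 0) / (s - 0) \<le> f y - f x"
      by (simp add: divide_le_eq mult.commute)
  qed
  moreover have "at (0::real) within {0..1} \<noteq> bot"
    using at_within_Icc_at_right[of "0::real" 1] by simp
  ultimately have "g \<bullet> (y - x) \<le> f y - f x" by (rule tendsto_upperbound)
  then show ?thesis by simp
qed

lemma projected_gradient_step:
  fixes x g u :: "'a::euclidean_space"
  assumes "convex \<Omega>" "closed \<Omega>" "u \<in> \<Omega>"
  shows "2 * \<eta> * (g \<bullet> (x - u))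
    \<le> (norm (x - u))^2 - (norm (closest_point \<Omega> (x - \<eta> *\<^sub>R g) - u))^2 + \<eta>^2 * (norm g)^2"
proof -
  have "dist (closest_point \<Omega> (x - \<eta> *\<^sub>R g)) (closest_point \<Omega> u) \<le> dist (x - \<eta> *\<^sub>R g) u"
    using assms by (intro closest_point_lipschitz) auto
  then have "norm (closest_point \<Omega> (x - \<eta> *\<^sub>R g) - u) \<le> norm ((x - u) - \<eta> *\<^sub>R g)"
    using closest_point_self[OF assms(3)] by (simp add: dist_norm algebra_simps)
  then have "(norm (closest_point \<Omega> (x - \<eta> *\<^sub>R g) - u))^2 \<le> (norm ((x - u) - \<eta> *\<^sub>R g))^2"
    by (intro power_mono) auto
  also have "\<dots> = (norm (x - u))^2 - 2 * \<eta> * (g \<bullet> (x - u)) + \<eta>^2 * (norm g)^2"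
    unfolding power2_norm_eq_inner
    by (simp add: inner_diff_left inner_diff_right inner_commute algebra_simps power2_eq_square)
  finally show ?thesis by simp
qed

lemma norm_diff_square_shift_le:
  fixes p q q' :: "'a::real_normed_vector"
  assumes "norm (p - q) \<le> D" "norm (p - q') \<le> D"
  shows "(norm (p - q'))^2 \<le> (norm (p - q))^2 + 2 * D * norm (q' - q)"
proof -
  have "(norm (p - q'))^2 - (norm (p - q))^2 = (norm (p - q') - norm (p - q)) * (norm (p - q') + norm (p - q))"
    by (simp add: power2_eq_square algebra_simps)
  also have "\<dots> \<le> norm (q' - q) * (2 * D)"
  proof (rule mult_mono)
    show "norm (p - q') - norm (p - q) \<le> norm (q' - q)"
      using norm_triangle_ineq3[of "p - q'" "p - q"] by (simp add: norm_minus_commute)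
  qed (use assms in auto)
  finally show ?thesis by (simp add: algebra_simps)
qed

lemma sum_telescope_le:
  fixes a b c :: "nat \<Rightarrow> real"
  assumes "1 \<le> T" and step: "\<forall>t\<in>{1..<T}. a (Suc t) \<le> b t + c t"
  shows "(\<Sum>t=1..T. a t - b t) \<le> a 1 - b T + (\<Sum>t\<in>{1..<T}. c t)"
  using assms
proof (induction T rule: nat_induct_at_least)
  case base
  then show ?case by simp
next
  case (Suc T)
  then have "(\<Sum>t=1..T. a t - b t) \<le> a 1 - b T + (\<Sum>t\<in>{1..<T}. c t)" by simp
  moreover have "a (Suc T) \<le> b T + c T" using Suc by simp
  moreover have "(\<Sum>t=1..Suc T. a t - b t) = (\<Sum>t=1..T. a t - b t) + (a (Suc T) - b (Suc T))"
    using Suc by simp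
  moreover have "(\<Sum>t\<in>{1..<Suc T}. c t) = (\<Sum>t\<in>{1..<T}. c t) + c T"
    using Suc by (simp add: sum.atLeastLessThan_Suc)
  ultimately show ?case by linarith
qed

lemma ogd_dynamic_regret:
  fixes \<Omega> :: "'a::euclidean_space set" and xs gs us :: "nat \<Rightarrow> 'a"
  assumes \<Omega>: "convex \<Omega>" "closed \<Omega>"
    and diam: "\<forall>v\<in>\<Omega>. \<forall>v'\<in>\<Omega>. norm (v - v') \<le> D"
    and \<eta>: "0 < \<eta>" and T: "1 \<le> T"
    and xs: "\<forall>t\<in>{1..T}. xs t \<in> \<Omega>" and us: "\<forall>t\<in>{1..T}. us t \<in> \<Omega>"
    and step: "\<forall>t\<in>{1..<T}. xs (Suc t) = closest_point \<Omega> (xs t - \<eta> *\<^sub>R gs t)"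
    and gs: "\<forall>t\<in>{1..T}. norm (gs t) \<le> G"
  shows "(\<Sum>t=1..T. gs t \<bullet> (xs t - us t))
    \<le> (D^2 + 2 * D * (\<Sum>t=1..T. norm (us (Suc t) - us t))) / (2 * \<eta>) + \<eta> * T * G^2 / 2"
proof -
  define a where "a t = (norm (xs t - us t))^2" for t
  define b where "b t = (norm (closest_point \<Omega> (xs t - \<eta> *\<^sub>R gs t) - us t))^2" for t
  define P where "P = (\<Sum>t=1..T. norm (us (Suc t) - us t))"
  have D: "0 \<le> D" using diam xs T by (metis atLeastAtMost_iff le_refl norm_ge_zero order_trans)
  have "(\<Sum>t=1..T. 2 * \<eta> * (gs t \<bullet> (xs t - us t))) \<le> (\<Sum>t=1..T. a t - b t + \<eta>^2 * G^2)"
  proof (rule sum_mono)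
    fix t assume t: "t \<in> {1..T}"
    have "\<eta>^2 * (norm (gs t))^2 \<le> \<eta>^2 * G^2"
      using gs t by (intro mult_left_mono power_mono) auto
    then show "2 * \<eta> * (gs t \<bullet> (xs t - us t)) \<le> a t - b t + \<eta>^2 * G^2"
      using projected_gradient_step[OF \<Omega>, of "us t" \<eta> "gs t" "xs t"] us t
      by (simp add: a_def b_def)
  qed
  also have "\<dots> = (\<Sum>t=1..T. a t - b t) + T * (\<eta>^2 * G^2)" by (simp add: sum.distrib)
  also have "(\<Sum>t=1..T. a t - b t) \<le> a 1 - b T + (\<Sum>t\<in>{1..<T}. 2 * D * norm (us (Suc t) - us t))"
  proof (rule sum_telescope_le[OF T], intro ballI)
    fix t assume t: "t \<in> {1..<T}"
    then have "xs (Suc t) \<in> \<Omega>" "us t \<in> \<Omega>" "us (Suc t) \<in> \<Omega>" using xs us by auto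
    then show "a (Suc t) \<le> b t + 2 * D * norm (us (Suc t) - us t)"
      using step t diam by (auto simp: a_def b_def intro!: norm_diff_square_shift_le)
  qed
  also have "a 1 - b T + (\<Sum>t\<in>{1..<T}. 2 * D * norm (us (Suc t) - us t)) \<le> D^2 + 2 * D * P"
  proof -
    have "a 1 \<le> D^2" using diam xs us T by (auto simp: a_def intro!: power_mono)
    moreover have "(\<Sum>t\<in>{1..<T}. norm (us (Suc t) - us t)) \<le> P"
      unfolding P_def by (rule sum_mono2) auto
    then have "2 * D * (\<Sum>t\<in>{1..<T}. norm (us (Suc t) - us t)) \<le> 2 * D * P"
      using D by (intro mult_left_mono) auto
    moreover have "0 \<le> b T" by (simp add: b_def)
    ultimately show ?thesis using \<open>a 1 \<le> D^2\<close> by (simp add: sum_distrib_left[symmetric])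
  qed
  finally have "2 * \<eta> * (\<Sum>t=1..T. gs t \<bullet> (xs t - us t)) \<le> D^2 + 2 * D * P + T * (\<eta>^2 * G^2)"
    by (simp add: sum_distrib_left)
  then show ?thesis using \<eta> by (simp add: P_def field_simps power2_eq_square)
qed

lemma tuned_step_size_bound:
  fixes D G P m T :: real
  assumes D: "0 < D" and G: "0 < G" and P: "0 \<le> P" "P \<le> D"
    and m: "1 \<le> m" "m \<le> T" "T \<le> 2 * m"
  shows "(D^2 + 2 * D * P) / (2 * (D / (G * sqrt m))) + D / (G * sqrt m) * T * G^2 / 2
    \<le> ((1 + sqrt 2) / 2 * D * G + G * sqrt (D * P)) * sqrt T"
proof -
  have sm: "0 < sqrt m" using m by simp
  have "(D^2 + 2 * D * P) / (2 * (D / (G * sqrt m))) + D / (G * sqrt m) * T * G^2 / 2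
      = D * G * sqrt m / 2 + P * G * sqrt m + D * G * (T / sqrt m) / 2"
    using sm D G by (simp add: field_simps power2_eq_square)
  also have "\<dots> \<le> D * G * sqrt T / 2 + sqrt (D * P) * G * sqrt T + D * G * (sqrt 2 * sqrt T) / 2"
  proof (intro add_mono divide_right_mono mult_mono mult_left_mono)
    show "sqrt m \<le> sqrt T" using m by simp
    show "P \<le> sqrt (D * P)" using P by (intro real_le_rsqrt) (simp add: power2_eq_square mult_right_mono)
    have "(T / sqrt m)^2 \<le> 2 * T"
      using m by (simp add: power_divide divide_le_eq power2_eq_square mult_right_mono)
    then show "T / sqrt m \<le> sqrt 2 * sqrt T" by (simp add: real_le_rsqrt flip: real_sqrt_mult)
  qed (use D G P m in auto)
  also have "\<dots> = ((1 + sqrt 2) / 2 * D * G + G * sqrt (D * P)) * sqrt T"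
    by (simp add: algebra_simps add_divide_distrib)
  finally show ?thesis .
qed

lemma ogd_tuned_dynamic_regret:
  fixes \<Omega> :: "'a::euclidean_space set" and f :: "nat \<Rightarrow> 'a \<Rightarrow> real" and g :: "nat \<Rightarrow> 'a \<Rightarrow> 'a"
    and xs us :: "nat \<Rightarrow> 'a" and m :: nat
  assumes \<Omega>: "convex \<Omega>" "closed \<Omega>"
    and diam: "\<forall>v\<in>\<Omega>. \<forall>v'\<in>\<Omega>. norm (v - v') \<le> D"
    and convex_f: "\<forall>t\<in>{1..T}. convex_on \<Omega> (f t)"
    and grad: "\<forall>t\<in>{1..T}. \<forall>v\<in>\<Omega>. (f t has_derivative (\<lambda>h. g t v \<bullet> h)) (at v within \<Omega>)"
    and grad_bound: "\<forall>t\<in>{1..T}. \<forall>v\<in>\<Omega>. norm (g t v) \<le> G"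
    and xs: "\<forall>t\<in>{1..T}. xs t \<in> \<Omega>"
    and step: "\<forall>t\<in>{1..<T}. xs (Suc t) = closest_point \<Omega> (xs t - (D / (G * sqrt m)) *\<^sub>R g t (xs t))"
    and us: "\<forall>t\<in>{1..T}. us t \<in> \<Omega>"
    and path: "(\<Sum>t=1..T. norm (us (Suc t) - us t)) \<le> D"
    and m: "1 \<le> m" "m \<le> T" "T \<le> 2 * m"
  shows "(\<Sum>t=1..T. f t (xs t) - f t (us t))
    \<le> ((1 + sqrt 2) / 2 * D * G + G * sqrt (D * (\<Sum>t=1..T. norm (us (Suc t) - us t)))) * sqrt T"
proof -
  define P where "P = (\<Sum>t=1..T. norm (us (Suc t) - us t))"
  have P: "0 \<le> P" by (simp add: P_def sum_nonneg)
  have one: "1 \<in> {1..T}" using m by simp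
  then have "norm (xs 1 - xs 1) \<le> D" "norm (g 1 (xs 1)) \<le> G" using xs diam grad_bound by blast+
  then have D: "0 \<le> D" and G: "0 \<le> G" by (simp, meson norm_ge_zero order_trans)
  have "(\<Sum>t=1..T. f t (xs t) - f t (us t)) \<le> (\<Sum>t=1..T. g t (xs t) \<bullet> (xs t - us t))"
  proof (rule sum_mono)
    fix t assume t: "t \<in> {1..T}"
    have "f t (xs t) + g t (xs t) \<bullet> (us t - xs t) \<le> f t (us t)"
      using t xs us convex_f grad by (intro convex_on_gradient_ineq[OF \<Omega>(1)]) auto
    then show "f t (xs t) - f t (us t) \<le> g t (xs t) \<bullet> (xs t - us t)"
      by (simp add: inner_diff_right)
  qed
  also have "\<dots> \<le> ((1 + sqrt 2) / 2 * D * G + G * sqrt (D * P)) * sqrt T"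
  proof (cases "G = 0 \<or> D = 0")
    case True
    have "g t (xs t) \<bullet> (xs t - us t) = 0" if "t \<in> {1..T}" for t
      using True grad_bound diam xs us that by fastforce
    then show ?thesis using D G P by simp
  next
    case False
    then have "0 < D" "0 < G" using D G by auto
    then have "(\<Sum>t=1..T. g t (xs t) \<bullet> (xs t - us t))
        \<le> (D^2 + 2 * D * P) / (2 * (D / (G * sqrt m))) + D / (G * sqrt m) * T * G^2 / 2"
      unfolding P_def using m xs us step grad_bound
      by (intro ogd_dynamic_regret[OF \<Omega> diam]) auto
    also have "\<dots> \<le> ((1 + sqrt 2) / 2 * D * G + G * sqrt (D * P)) * sqrt T"
      using \<open>0 < D\<close> \<open>0 < G\<close> P m path by (intro tuned_step_size_bound) (auto simp: P_def)
    finally show ?thesis .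
  qed
  finally show ?thesis by (simp add: P_def)
qed

theorem lemma6:
  fixes \<Omega> :: "'a::euclidean_space set"
    and f :: "nat \<Rightarrow> 'a \<Rightarrow> real"
    and g :: "nat \<Rightarrow> 'a \<Rightarrow> 'a"
    and G D :: real
    and T :: nat
    and x :: "nat \<Rightarrow> nat \<Rightarrow> 'a"
    and w :: "nat \<Rightarrow> 'a"
    and u :: "nat \<Rightarrow> 'a"
  assumes T_pos: "T \<ge> 1"
    and convex_dom: "convex \<Omega>" and closed_dom: "closed \<Omega>"
    and zero_in: "0 \<in> \<Omega>"
    and diam: "\<forall>v\<in>\<Omega>. \<forall>v'\<in>\<Omega>. norm (v - v') \<le> D"
    and convex_f: "\<forall>t\<in>{1..T}. convex_on \<Omega> (f t)"
    and grad: "\<forall>t\<in>{1..T}. \<forall>v\<in>\<Omega>. (f t has_derivative (\<lambda>h. g t v \<bullet> h)) (at v within \<Omega>)"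
    and grad_bound: "\<forall>t\<in>{1..T}. \<forall>v\<in>\<Omega>. norm (g t v) \<le> G"
    and f_range: "\<forall>t\<in>{1..T}. \<forall>v\<in>\<Omega>. 0 \<le> f t v \<and> f t v \<le> 1"
    and expert_init: "\<forall>k\<in>levels T. x k 1 \<in> \<Omega>"
    and expert_step: "\<forall>k\<in>levels T. \<forall>t\<in>{1..<T}.
        x k (Suc t) = closest_point \<Omega> (x k t - (D / (G * sqrt (2 ^ k))) *\<^sub>R g t (x k t))"
    and play: "\<forall>t\<in>{1..T}. w t = (\<Sum>k\<in>levels T. meta_prob T f w x k t *\<^sub>R x k t)"
    and comparator: "\<forall>t\<in>{1..T+1}. u t \<in> \<Omega>"
    and path_len: "(\<Sum>t=1..T. norm (u (Suc t) - u t)) \<le> D"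
  shows "(\<Sum>t=1..T. f t (w t)) - (\<Sum>t=1..T. f t (u t))
         \<le> ((1 + sqrt 2) / 2 * D * G + G * sqrt (D * (\<Sum>t=1..T. norm (u (Suc t) - u t)))
             + sqrt (6 * cT T)) * sqrt (real T)"
proof -
  obtain kk where kk: "2 ^ kk \<le> T" "T < 2 ^ Suc kk"
    using ex_power_ivl1[of 2 T] T_pos by auto
  have x_in: "\<forall>k\<in>levels T. \<forall>t\<in>{1..T}. x k t \<in> \<Omega>"
  proof
    fix k assume "k \<in> levels T"
    then show "\<forall>t\<in>{1..T}. x k t \<in> \<Omega>"
      using expert_init expert_step zero_in by (intro projected_iterates_in[OF closed_dom]) auto
  qed
  have meta: "(\<Sum>t=1..T. f t (w t) - f t (x kk t)) \<le> sqrt (6 * cT T) * sqrt T"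
    by (rule aod_meta_regret[OF T_pos kk convex_dom zero_in convex_f f_range x_in play])
  have "kk \<in> levels T" using kk by (simp add: levels_def)
  then have expert: "(\<Sum>t=1..T. f t (x kk t) - f t (u t))
      \<le> ((1 + sqrt 2) / 2 * D * G + G * sqrt (D * (\<Sum>t=1..T. norm (u (Suc t) - u t)))) * sqrt T"
    using convex_dom closed_dom diam convex_f grad grad_bound x_in expert_step comparator path_len kk
    by (intro ogd_tuned_dynamic_regret[where m = "2 ^ kk"]) auto
  show ?thesis
    using meta expert by (simp add: sum_subtractf algebra_simps)
qed

end
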